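(* Let $\leq$ be an admissible bi-invariant total order on a group $G$. Then $\leq$ is a quasi-total order, and for every dominant $g\in G^{++}$ the growth function $\gamma_g:G\to\mathbb{R}$ is a group homomorphism.
   Context: A partial order $\leq$ on a group $G$ is bi-invariant if $g\leq h$ implies $gk\leq hk$ and $kg\leq kh$ for all $g,h,k$. $G^+=\{g: g\geq e\}$; the dominants are $G^{++}=\{g\in G^+\setminus\{e\}: \forall h\in G\ \exists n\in\mathbb{N}_0,\ g^n\geq h\}$; admissible means $G^{++}\neq\emptyset$. For $g\in G^{++}$, $\gamma_g(h)=\lim_{n\to\infty}\frac1n\inf\{p\in\mathbb{Z}: g^p\geq h^n\}$. A half-space filtration of a set $X$ is a family $\{H_n\}_{n\in\mathbb{Z}}$ of subsets with $H_{n+1}\subsetneq H_n$, $\bigcap H_n=\emptyset$, $\bigcup H_n=X$; the height is $h(a)=\sup\{n: a\in H_n\}$ and $h(a,b)=h(a)-h(b)$. $(X,\preceq,\{H_n\})$ is a half-space order if $(X,\preceq)$ is a poset, $\{H_n\}$ a half-space filtration, and for some constant $w$, $h(a,b)\geq w\Rightarrow a\succeq b$. A $G$-action on $X$ is by quasi-automorphisms if for some $d$, $|h(ga,gb)-h(a,b)|\leq d$ for all $g,a,b$; unbounded if some $g\in G,a\in X$ satisfy $h(g^na)\to\pm\infty$ as $n\to\pm\infty$. For an effective action, the induced order on $G$ is $g\leq h\Leftrightarrow\forall k\in G\,\forall x\in X:(kg).x\preceq(kh).x$. A quasi-total order on $G$ is an order induced from an effective, unbounded action by quasi-automorphisms on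 some half-space order. *)

theory Defs
  imports "HOL-Analysis.Analysis" "HOL-Algebra.Group_Action"
begin

definition partial_order_rel :: "'x set \<Rightarrow> ('x \<Rightarrow> 'x \<Rightarrow> bool) \<Rightarrow> bool" where
  "partial_order_rel X r \<longleftrightarrow>
     (\<forall>a\<in>X. r a a) \<and>
     (\<forall>a\<in>X. \<forall>b\<in>X. r a b \<and> r b a \<longrightarrow> a = b) \<and>
     (\<forall>a\<in>X. \<forall>b\<in>X. \<forall>c\<in>X. r a b \<and> r b c \<longrightarrow> r a c)"

definition bi_invariant_order :: "('a, 'b) monoid_scheme \<Rightarrow> ('a \<Rightarrow> 'a \<Rightarrow> bool) \<Rightarrow> bool" where
  "bi_invariant_order G leq \<longleftrightarrow>
     partial_order_rel (carrier G) leq \<and>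
     (\<forall>g\<in>carrier G. \<forall>h\<in>carrier G. \<forall>k\<in>carrier G.
        leq g h \<longrightarrow> leq (g \<otimes>\<^bsub>G\<^esub> k) (h \<otimes>\<^bsub>G\<^esub> k) \<and> leq (k \<otimes>\<^bsub>G\<^esub> g) (k \<otimes>\<^bsub>G\<^esub> h))"

definition total_rel :: "'x set \<Rightarrow> ('x \<Rightarrow> 'x \<Rightarrow> bool) \<Rightarrow> bool" where
  "total_rel X r \<longleftrightarrow> (\<forall>a\<in>X. \<forall>b\<in>X. r a b \<or> r b a)"

definition dominants :: "('a, 'b) monoid_scheme \<Rightarrow> ('a \<Rightarrow> 'a \<Rightarrow> bool) \<Rightarrow> 'a set" where
  "dominants G leq = {g \<in> carrier G. leq \<one>\<^bsub>G\<^esub> g \<and> g \<noteq> \<one>\<^bsub>G\<^esub> \<and>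
       (\<forall>h\<in>carrier G. \<exists>n::nat. leq h (g [^]\<^bsub>G\<^esub> n))}"

definition admissible :: "('a, 'b) monoid_scheme \<Rightarrow> ('a \<Rightarrow> 'a \<Rightarrow> bool) \<Rightarrow> bool" where
  "admissible G leq \<longleftrightarrow> dominants G leq \<noteq> {}"

definition growth_seq :: "('a, 'b) monoid_scheme \<Rightarrow> ('a \<Rightarrow> 'a \<Rightarrow> bool) \<Rightarrow> 'a \<Rightarrow> 'a \<Rightarrow> nat \<Rightarrow> real" where
  "growth_seq G leq g h n =
     real_of_int (Inf {p::int. leq (h [^]\<^bsub>G\<^esub> n) (g [^]\<^bsub>G\<^esub> p)}) / real n"

definition growth :: "('a, 'b) monoid_scheme \<Rightarrow> ('a \<Rightarrow> 'a \<Rightarrow> bool) \<Rightarrow> 'a \<Rightarrow> 'a \<Rightarrow> real" where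
  "growth G leq g h = lim (growth_seq G leq g h)"

definition half_space_filtration :: "'x set \<Rightarrow> (int \<Rightarrow> 'x set) \<Rightarrow> bool" where
  "half_space_filtration X H \<longleftrightarrow>
     (\<forall>n. H (n + 1) \<subset> H n) \<and> (\<Inter>n. H n) = {} \<and> (\<Union>n. H n) = X"

definition height :: "(int \<Rightarrow> 'x set) \<Rightarrow> 'x \<Rightarrow> int" where
  "height H a = Sup {n. a \<in> H n}"

definition height2 :: "(int \<Rightarrow> 'x set) \<Rightarrow> 'x \<Rightarrow> 'x \<Rightarrow> int" where
  "height2 H a b = height H a - height H b"

definition half_space_order :: "'x set \<Rightarrow> ('x \<Rightarrow> 'x \<Rightarrow> bool) \<Rightarrow> (int \<Rightarrow> 'x set) \<Rightarrow> bool" where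
  "half_space_order X pr H \<longleftrightarrow>
     partial_order_rel X pr \<and> half_space_filtration X H \<and>
     (\<exists>w::int. \<forall>a\<in>X. \<forall>b\<in>X. height2 H a b \<ge> w \<longrightarrow> pr b a)"

definition quasi_aut_action ::
    "('a, 'b) monoid_scheme \<Rightarrow> 'x set \<Rightarrow> (int \<Rightarrow> 'x set) \<Rightarrow> ('a \<Rightarrow> 'x \<Rightarrow> 'x) \<Rightarrow> bool" where
  "quasi_aut_action G X H \<phi> \<longleftrightarrow> group_action G X \<phi> \<and>
     (\<exists>d::int. \<forall>g\<in>carrier G. \<forall>a\<in>X. \<forall>b\<in>X.
        \<bar>height2 H (\<phi> g a) (\<phi> g b) - height2 H a b\<bar> \<le> d)"

definition effective_action :: "('a, 'b) monoid_scheme \<Rightarrow> 'x set \<Rightarrow> ('a \<Rightarrow> 'x \<Rightarrow> 'x) \<Rightarrow> bool" where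
  "effective_action G X \<phi> \<longleftrightarrow>
     (\<forall>g\<in>carrier G. (\<forall>x\<in>X. \<phi> g x = x) \<longrightarrow> g = \<one>\<^bsub>G\<^esub>)"

definition unbounded_action ::
    "('a, 'b) monoid_scheme \<Rightarrow> 'x set \<Rightarrow> (int \<Rightarrow> 'x set) \<Rightarrow> ('a \<Rightarrow> 'x \<Rightarrow> 'x) \<Rightarrow> bool" where
  "unbounded_action G X H \<phi> \<longleftrightarrow>
     (\<exists>g\<in>carrier G. \<exists>a\<in>X.
        filterlim (\<lambda>n::int. height H (\<phi> (g [^]\<^bsub>G\<^esub> n) a)) at_top at_top \<and>
        filterlim (\<lambda>n::int. height H (\<phi> (g [^]\<^bsub>G\<^esub> n) a)) at_bot at_bot)"

definition induced_order ::
    "('a, 'b) monoid_scheme \<Rightarrow> 'x set \<Rightarrow> ('x \<Rightarrow> 'x \<Rightarrow> bool) \<Rightarrow> ('a \<Rightarrow> 'x \<Rightarrow> 'x) \<Rightarrow> 'a \<Rightarrow> 'a \<Rightarrow> bool" where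
  "induced_order G X pr \<phi> g h \<longleftrightarrow>
     (\<forall>k\<in>carrier G. \<forall>x\<in>X. pr (\<phi> (k \<otimes>\<^bsub>G\<^esub> g) x) (\<phi> (k \<otimes>\<^bsub>G\<^esub> h) x))"

text \<open>Quasi-total order; the space X is taken to be a set of elements of the
  same type as the group elements.\<close>
definition quasi_total_order :: "('a, 'b) monoid_scheme \<Rightarrow> ('a \<Rightarrow> 'a \<Rightarrow> bool) \<Rightarrow> bool" where
  "quasi_total_order G leq \<longleftrightarrow>
     (\<exists>(X::'a set) pr H \<phi>. half_space_order X pr H \<and> quasi_aut_action G X H \<phi> \<and>
        effective_action G X \<phi> \<and> unbounded_action G X H \<phi> \<and>
        (\<forall>g\<in>carrier G. \<forall>h\<in>carrier G. leq g h \<longleftrightarrow> induced_order G X pr \<phi> g h))"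

end

theory Submission
  imports Defs
begin

text \<open>Fix a dominant \<open>g\<close>. Every \<open>h\<close> is squeezed between powers of \<open>g\<close>, so
  \<open>c(h) = min {p. h \<le> g\<^sup>p}\<close> is well defined, and bi-invariance together with totality makes
  \<open>c\<close> a quasi-morphism: \<open>c(xy)\<close> differs from \<open>c(x) + c(y)\<close> by at most 1. Along the powers of
  \<open>h\<close> this gives convergence of \<open>c(h\<^sup>n)/n\<close> as for subadditive sequences, and since
  \<open>(xy)\<^sup>n\<close> lies between \<open>x\<^sup>n y\<^sup>n\<close> and \<open>y\<^sup>n x\<^sup>n\<close> the limit is additive.
  For quasi-totality, \<open>G\<close> acts on itself by left translation, the half-spaces being
  \<open>{a. g\<^sup>n \<le> a}\<close>; the height of \<open>a\<close> is \<open>-c(a\<inverse>)\<close>, so the same quasi-morphism bound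
  turns left translations into quasi-automorphisms.\<close>

lemma upclosed_int_set_iff_Inf_le:
  fixes S :: "int set"
  assumes "S \<noteq> {}" and "bdd_below S" and up: "\<And>p q. p \<in> S \<Longrightarrow> p \<le> q \<Longrightarrow> q \<in> S"
  shows "q \<in> S \<longleftrightarrow> Inf S \<le> q"
proof -
  have "Inf S \<in> S"
  proof (rule ccontr)
    assume "Inf S \<notin> S"
    have gt: "Inf S < p" if "p \<in> S" for p
      using that \<open>Inf S \<notin> S\<close> cInf_lower[OF that assms(2)] by (metis le_less)
    then have "Inf S + 1 \<le> Inf S"
      using assms(1) by (intro cInf_greatest) (auto dest: gt)
    then show False by simp
  qed
  then show ?thesis
    using up cInf_lower assms(2) by blast
qed

lemma quasi_additive_mult_bound:
  fixes a :: "nat \<Rightarrow> real"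
  assumes "a 0 = 0" and qa: "\<And>m n. \<bar>a (m + n) - a m - a n\<bar> \<le> C"
  shows "\<bar>a (k * m) - k * a m\<bar> \<le> k * C"
proof (induction k)
  case 0
  then show ?case using assms(1) by simp
next
  case (Suc k)
  have "\<bar>a (k * m + m) - a (k * m) - a m\<bar> \<le> C" by (rule qa)
  with Suc show ?case by (simp add: algebra_simps abs_le_iff)
qed

lemma quasi_additive_ratio_mult:
  fixes a :: "nat \<Rightarrow> real"
  assumes "a 0 = 0" and "\<And>m n. \<bar>a (m + n) - a m - a n\<bar> \<le> C" and "k > 0" and "m > 0"
  shows "\<bar>a (k * m) / (k * m) - a m / m\<bar> \<le> C / m"
proof -
  have "a (k * m) / (k * m) - a m / m = (a (k * m) - k * a m) / (k * m)"
    using assms(3,4) by (simp add: field_simps)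
  then have "\<bar>a (k * m) / (k * m) - a m / m\<bar> = \<bar>a (k * m) - k * a m\<bar> / (k * m)"
    by (simp add: abs_divide)
  also have "\<dots> \<le> k * C / (k * m)"
    using quasi_additive_mult_bound[OF assms(1,2)] by (intro divide_right_mono) auto
  finally show ?thesis
    using assms(3) by simp
qed

lemma quasi_additive_convergent:
  fixes a :: "nat \<Rightarrow> real"
  assumes "a 0 = 0" and "\<And>m n. \<bar>a (m + n) - a m - a n\<bar> \<le> C"
  shows "convergent (\<lambda>n. a n / n)"
proof -
  have dist: "\<bar>a m / m - a n / n\<bar> \<le> C / m + C / n" if "m > 0" "n > 0" for m n
    using quasi_additive_ratio_mult[OF assms, of n m] quasi_additive_ratio_mult[OF assms, of m n] that
    by (simp add: mult.commute abs_le_iff)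
  have "C \<ge> 0"
    using assms(2)[of 0 0] by linarith
  have "Cauchy (\<lambda>n. a n / n)"
  proof (rule CauchyI)
    fix e :: real assume "e > 0"
    obtain M :: nat where "2 * C / e < M" and "M > 0"
      using reals_Archimedean2[of "max 1 (2 * C / e)"] by auto
    then have "2 * (C / M) < e"
      using \<open>e > 0\<close> by (simp add: field_simps)
    have le_CM: "C / m \<le> C / M" if "M \<le> m" for m :: nat
      using that \<open>M > 0\<close> \<open>C \<ge> 0\<close> by (intro divide_left_mono) auto
    have "\<bar>a m / m - a n / n\<bar> < e" if "M \<le> m" "M \<le> n" for m n :: nat
      using dist[of m n] le_CM[OF that(1)] le_CM[OF that(2)] that \<open>M > 0\<close> \<open>2 * (C / M) < e\<close>
      by linarith
    then show "\<exists>M. \<forall>m\<ge>M. \<forall>n\<ge>M. norm (a m / m - a n / n) < e"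
      by auto
  qed
  then show ?thesis
    by (simp add: Cauchy_convergent_iff)
qed

lemma tendsto_ratio_of_bounded_defect:
  fixes a b c :: "nat \<Rightarrow> real"
  assumes "convergent (\<lambda>n. a n / n)" and "convergent (\<lambda>n. b n / n)"
    and "\<And>n. \<bar>c n - a n - b n\<bar> \<le> C"
  shows "(\<lambda>n. c n / n) \<longlonglongrightarrow> lim (\<lambda>n. a n / n) + lim (\<lambda>n. b n / n)"
proof -
  have "(\<lambda>n. (c n - a n - b n) / n) \<longlonglongrightarrow> 0"
    using assms(3) by (intro Lim_null_comparison[OF _ lim_const_over_n[of C]])
      (simp add: abs_divide divide_right_mono)
  then have "(\<lambda>n. a n / n + b n / n + (c n - a n - b n) / n) \<longlonglongrightarrow> lim (\<lambda>n. a n / n) + lim (\<lambda>n. b n / n) + 0"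
    using assms(1,2) by (intro tendsto_add) (simp_all add: convergent_LIMSEQ_iff)
  then show ?thesis
    by (simp add: diff_divide_distrib)
qed

definition (in group) left_translation :: "'a \<Rightarrow> 'a \<Rightarrow> 'a"
  where "left_translation k = (\<lambda>x\<in>carrier G. k \<otimes> x)"

lemma (in group) left_translation_Bij:
  assumes "k \<in> carrier G"
  shows "left_translation k \<in> Bij (carrier G)"
proof -
  have "inj_on (\<lambda>x. k \<otimes> x) (carrier G)"
    using assms by (intro inj_onI) simp
  moreover have "x = k \<otimes> (inv k \<otimes> x)" if "x \<in> carrier G" for x
    using assms that by (simp flip: m_assoc)
  then have "(\<lambda>x. k \<otimes> x) ` carrier G = carrier G"
    using assms by force
  ultimately show ?thesis
    unfolding Bij_def left_translation_def bij_betw_def by simp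
qed

lemma (in group) left_translation_group_action: "group_action G (carrier G) left_translation"
proof -
  have "left_translation (k1 \<otimes> k2) = compose (carrier G) (left_translation k1) (left_translation k2)"
    if "k1 \<in> carrier G" "k2 \<in> carrier G" for k1 k2
    using that by (auto simp: left_translation_def compose_def m_assoc)
  then have "left_translation \<in> hom G (BijGroup (carrier G))"
    using left_translation_Bij by (auto simp: hom_def BijGroup_def)
  then show ?thesis
    unfolding group_action_def group_hom_def
    by (simp add: group_BijGroup group_hom_axioms.intro is_group)
qed

lemma (in group) left_translation_effective: "effective_action G (carrier G) left_translation"
  unfolding effective_action_def left_translation_def
  by (metis one_closed r_one restrict_apply')

locale bi_ordered_group = group G for G (structure) +
  fixes le :: "'a \<Rightarrow> 'a \<Rightarrow> bool" (infix "\<preceq>" 50)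
  assumes bi_invariant: "bi_invariant_order G (\<preceq>)"
    and total: "total_rel (carrier G) (\<preceq>)"
begin

lemma le_refl: "a \<in> carrier G \<Longrightarrow> a \<preceq> a"
  using bi_invariant unfolding bi_invariant_order_def partial_order_rel_def by blast

lemma le_antisym: "\<lbrakk>a \<in> carrier G; b \<in> carrier G; a \<preceq> b; b \<preceq> a\<rbrakk> \<Longrightarrow> a = b"
  using bi_invariant unfolding bi_invariant_order_def partial_order_rel_def by blast

lemma le_trans: "\<lbrakk>a \<in> carrier G; b \<in> carrier G; c \<in> carrier G; a \<preceq> b; b \<preceq> c\<rbrakk> \<Longrightarrow> a \<preceq> c"
  using bi_invariant unfolding bi_invariant_order_def partial_order_rel_def by blast

lemma mult_right_mono: "\<lbrakk>a \<in> carrier G; b \<in> carrier G; k \<in> carrier G; a \<preceq> b\<rbrakk> \<Longrightarrow> a \<otimes> k \<preceq> b \<otimes> k"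
  using bi_invariant unfolding bi_invariant_order_def by blast

lemma mult_left_mono: "\<lbrakk>a \<in> carrier G; b \<in> carrier G; k \<in> carrier G; a \<preceq> b\<rbrakk> \<Longrightarrow> k \<otimes> a \<preceq> k \<otimes> b"
  using bi_invariant unfolding bi_invariant_order_def by blast

lemma le_total: "\<lbrakk>a \<in> carrier G; b \<in> carrier G\<rbrakk> \<Longrightarrow> a \<preceq> b \<or> b \<preceq> a"
  using total unfolding total_rel_def by blast

lemma mult_mono:
  "\<lbrakk>a \<in> carrier G; b \<in> carrier G; x \<in> carrier G; y \<in> carrier G; a \<preceq> x; b \<preceq> y\<rbrakk> \<Longrightarrow> a \<otimes> b \<preceq> x \<otimes> y"
  using le_trans[of "a \<otimes> b" "x \<otimes> b" "x \<otimes> y"] mult_right_mono[of a x b] mult_left_mono[of b y x]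
  by simp

lemma mult_neq_if_neq_left:
  assumes "a \<in> carrier G" "b \<in> carrier G" "x \<in> carrier G" "y \<in> carrier G"
    and "a \<preceq> x" "a \<noteq> x" "b \<preceq> y"
  shows "a \<otimes> b \<noteq> x \<otimes> y"
proof
  assume eq: "a \<otimes> b = x \<otimes> y"
  have "x \<otimes> b \<preceq> a \<otimes> b"
    using assms mult_left_mono[of b y x] by (simp add: eq)
  moreover have "a \<otimes> b \<preceq> x \<otimes> b"
    using assms by (simp add: mult_right_mono)
  ultimately show False
    using assms le_antisym[of "a \<otimes> b" "x \<otimes> b"] by simp
qed

lemma inv_antimono: "\<lbrakk>a \<in> carrier G; b \<in> carrier G; a \<preceq> b\<rbrakk> \<Longrightarrow> inv b \<preceq> inv a"
  using mult_right_mono[OF _ _ _ mult_left_mono[of a b "inv b"], of "inv a"] by (simp add: m_assoc)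

lemma inv_le_inv_iff: "\<lbrakk>a \<in> carrier G; b \<in> carrier G\<rbrakk> \<Longrightarrow> inv a \<preceq> inv b \<longleftrightarrow> b \<preceq> a"
  using inv_antimono[of b a] inv_antimono[of "inv a" "inv b"] by auto

lemma dual: "bi_ordered_group G (\<lambda>a b. b \<preceq> a)"
proof -
  have "bi_invariant_order G (\<lambda>a b. b \<preceq> a)"
    unfolding bi_invariant_order_def partial_order_rel_def
  proof (intro conjI ballI impI)
    show "a \<preceq> a" if "a \<in> carrier G" for a
      using that by (rule le_refl)
    show "a = b" if "a \<in> carrier G" "b \<in> carrier G" "b \<preceq> a \<and> a \<preceq> b" for a b
      using that le_antisym by blast
    show "c \<preceq> a" if "a \<in> carrier G" "b \<in> carrier G" "c \<in> carrier G" "b \<preceq> a \<and> c \<preceq> b" for a b c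
      using that le_trans[of c b a] by blast
    show "h \<otimes> k \<preceq> g \<otimes> k" "k \<otimes> h \<preceq> k \<otimes> g"
      if "g \<in> carrier G" "h \<in> carrier G" "k \<in> carrier G" "h \<preceq> g" for g h k
      using that by (simp_all add: mult_right_mono mult_left_mono)
  qed
  moreover have "total_rel (carrier G) (\<lambda>a b. b \<preceq> a)"
    unfolding total_rel_def using le_total by blast
  ultimately show ?thesis
    by (simp add: bi_ordered_group_def bi_ordered_group_axioms_def is_group)
qed

lemma mult_pow_le_pow_mult:
  assumes "a \<in> carrier G" "b \<in> carrier G" "a \<otimes> b \<preceq> b \<otimes> a"
  shows "a \<otimes> b [^] (n::nat) \<preceq> b [^] n \<otimes> a"
proof (induction n)
  case 0
  then show ?case using assms le_refl by simp
next
  case (Suc n)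
  have "a \<otimes> b [^] Suc n \<preceq> b [^] n \<otimes> (a \<otimes> b)"
    using mult_right_mono[OF _ _ _ Suc, of b] assms by (simp add: m_assoc)
  moreover have "b [^] n \<otimes> (a \<otimes> b) \<preceq> b [^] Suc n \<otimes> a"
    using mult_left_mono[OF _ _ _ assms(3), of "b [^] n"] assms by (simp add: m_assoc)
  ultimately show ?case
    using assms le_trans[of "a \<otimes> b [^] Suc n" "b [^] n \<otimes> (a \<otimes> b)"] by simp
qed

lemma pow_mult_le_mult_pow:
  assumes "a \<in> carrier G" "b \<in> carrier G" "a \<otimes> b \<preceq> b \<otimes> a"
  shows "a [^] (n::nat) \<otimes> b \<preceq> b \<otimes> a [^] n"
  using bi_ordered_group.mult_pow_le_pow_mult[OF dual, of b a n] assms by simp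

lemma pow_mult_bounds:
  assumes "a \<in> carrier G" "b \<in> carrier G" "a \<otimes> b \<preceq> b \<otimes> a"
  shows "a [^] n \<otimes> b [^] n \<preceq> (a \<otimes> b) [^] (n::nat) \<and> (a \<otimes> b) [^] n \<preceq> b [^] n \<otimes> a [^] n"
proof (induction n)
  case 0
  then show ?case using le_refl by simp
next
  case (Suc n)
  have "a [^] Suc n \<otimes> b [^] Suc n \<preceq> (a [^] n \<otimes> b [^] n) \<otimes> (a \<otimes> b)"
    using mult_right_mono[OF _ _ _ mult_left_mono[OF _ _ _ mult_pow_le_pow_mult[OF assms, of n], of "a [^] n"], of b]
      assms by (simp add: m_assoc)
  moreover have "(a [^] n \<otimes> b [^] n) \<otimes> (a \<otimes> b) \<preceq> (a \<otimes> b) [^] Suc n"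
    using mult_right_mono[of _ _ "a \<otimes> b"] Suc assms by simp
  moreover have "(a \<otimes> b) [^] Suc n \<preceq> b [^] n \<otimes> (a [^] Suc n \<otimes> b)"
    using mult_right_mono[OF _ _ _ conjunct2[OF Suc], of "a \<otimes> b"] assms by (simp add: m_assoc)
  moreover have "b [^] n \<otimes> (a [^] Suc n \<otimes> b) \<preceq> b [^] Suc n \<otimes> a [^] Suc n"
    using mult_left_mono[OF _ _ _ pow_mult_le_mult_pow[OF assms, of "Suc n"], of "b [^] n"] assms
    by (simp add: m_assoc)
  ultimately show ?case
    using assms le_trans by (meson m_closed nat_pow_closed)
qed

lemma pow_mult_between:
  assumes "x \<in> carrier G" "y \<in> carrier G"
  shows "x [^] n \<otimes> y [^] n \<preceq> (x \<otimes> y) [^] (n::nat) \<and> (x \<otimes> y) [^] n \<preceq> y [^] n \<otimes> x [^] n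
    \<or> y [^] n \<otimes> x [^] n \<preceq> (x \<otimes> y) [^] n \<and> (x \<otimes> y) [^] n \<preceq> x [^] n \<otimes> y [^] n"
  using le_total[of "x \<otimes> y" "y \<otimes> x"] pow_mult_bounds[of x y n]
    bi_ordered_group.pow_mult_bounds[OF dual, of x y n] assms
  by auto

lemma le_iff_induced_order:
  assumes "a \<in> carrier G" "b \<in> carrier G"
  shows "a \<preceq> b \<longleftrightarrow> induced_order G (carrier G) (\<preceq>) left_translation a b"
proof
  assume "a \<preceq> b"
  then show "induced_order G (carrier G) (\<preceq>) left_translation a b"
    using assms unfolding induced_order_def left_translation_def
    by (simp add: mult_left_mono mult_right_mono)
next
  assume "induced_order G (carrier G) (\<preceq>) left_translation a b"
  then have "left_translation (\<one> \<otimes> a) \<one> \<preceq> left_translation (\<one> \<otimes> b) \<one>"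
    unfolding induced_order_def by blast
  then show "a \<preceq> b"
    using assms by (simp add: left_translation_def)
qed

end

locale bi_ordered_group_with_dominant = bi_ordered_group +
  fixes g assumes dominant: "g \<in> dominants G (\<preceq>)"
begin

lemma dominant_closed [simp]: "g \<in> carrier G"
  and one_le_dominant: "\<one> \<preceq> g"
  and dominant_neq_one: "g \<noteq> \<one>"
  and le_dominant_nat_pow: "h \<in> carrier G \<Longrightarrow> \<exists>n::nat. h \<preceq> g [^] n"
  using dominant unfolding dominants_def by auto

lemma one_le_dominant_nat_pow: "\<one> \<preceq> g [^] (k::nat)"
proof (induction k)
  case 0
  then show ?case using le_refl by simp
next
  case (Suc k)
  have "g [^] k \<preceq> g [^] Suc k"
    using mult_left_mono[OF _ _ _ one_le_dominant, of "g [^] k"] by simp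
  with Suc show ?case
    using le_trans[of \<one> "g [^] k"] by simp
qed

lemma dominant_pow_mono: "p \<le> q \<Longrightarrow> g [^] (p::int) \<preceq> g [^] q"
  using mult_left_mono[OF _ _ _ one_le_dominant_nat_pow[of "nat (q - p)"], of "g [^] p"]
  by (simp add: int_pow_int flip: int_pow_mult)

lemma dominant_pow_le_pow_iff: "g [^] (p::int) \<preceq> g [^] q \<longleftrightarrow> p \<le> q"
proof
  assume le: "g [^] p \<preceq> g [^] q"
  show "p \<le> q"
  proof (rule ccontr)
    assume "\<not> p \<le> q"
    then have "g [^] (q + 1) \<preceq> g [^] q"
      using le_trans[OF _ _ _ dominant_pow_mono[of "q + 1" p] le] by simp
    moreover have "g [^] q \<preceq> g [^] (q + 1)"
      by (simp add: dominant_pow_mono)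
    ultimately have "g [^] q \<otimes> g = g [^] q"
      using le_antisym by (simp add: int_pow_mult)
    then show False
      using dominant_neq_one by simp
  qed
qed (rule dominant_pow_mono)

definition ceiling_exponent :: "'a \<Rightarrow> int"
  where "ceiling_exponent h = Inf {p. h \<preceq> g [^] p}"

lemma le_dominant_pow_iff:
  assumes "h \<in> carrier G"
  shows "h \<preceq> g [^] p \<longleftrightarrow> ceiling_exponent h \<le> p"
proof -
  let ?S = "{p::int. h \<preceq> g [^] p}"
  obtain n :: nat where "h \<preceq> g [^] n"
    using le_dominant_nat_pow assms by blast
  then have "int n \<in> ?S"
    by (simp add: int_pow_int)
  moreover obtain m :: nat where "inv h \<preceq> g [^] m"
    using le_dominant_nat_pow assms by blast
  then have "g [^] (- int m) \<preceq> h"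
    using inv_antimono[of "inv h" "g [^] m"] assms by (simp add: int_pow_neg int_pow_int)
  then have "- int m \<le> p" if "p \<in> ?S" for p
    using that le_trans[of "g [^] (- int m)" h "g [^] p"] assms by (simp add: dominant_pow_le_pow_iff)
  then have "bdd_below ?S"
    by (rule bdd_belowI)
  moreover have "q \<in> ?S" if "p \<in> ?S" "p \<le> q" for p q
    using that le_trans[OF assms _ _ _ dominant_pow_mono] by simp
  ultimately show ?thesis
    unfolding ceiling_exponent_def by (subst upclosed_int_set_iff_Inf_le[symmetric]) auto
qed

lemma le_dominant_pow_ceiling: "h \<in> carrier G \<Longrightarrow> h \<preceq> g [^] ceiling_exponent h"
  by (simp add: le_dominant_pow_iff)

lemma dominant_pow_ceiling_pred_lt:
  assumes "h \<in> carrier G"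
  shows "g [^] (ceiling_exponent h - 1) \<preceq> h \<and> g [^] (ceiling_exponent h - 1) \<noteq> h"
  using le_dominant_pow_iff[OF assms, of "ceiling_exponent h - 1"]
    le_total[OF assms, of "g [^] (ceiling_exponent h - 1)"] le_refl[OF assms]
  by auto

lemma ceiling_exponent_mono:
  "\<lbrakk>x \<in> carrier G; y \<in> carrier G; x \<preceq> y\<rbrakk> \<Longrightarrow> ceiling_exponent x \<le> ceiling_exponent y"
  using le_trans[OF _ _ _ _ le_dominant_pow_ceiling] le_dominant_pow_iff by simp

lemma ceiling_exponent_dominant_pow [simp]: "ceiling_exponent (g [^] (p::int)) = p"
  using le_dominant_pow_iff[of "g [^] p"] dominant_pow_le_pow_iff le_refl
  by (metis int_pow_closed dominant_closed order_antisym order_refl)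

lemma ceiling_exponent_mult_le:
  assumes "x \<in> carrier G" "y \<in> carrier G"
  shows "ceiling_exponent (x \<otimes> y) \<le> ceiling_exponent x + ceiling_exponent y"
proof -
  have "x \<otimes> y \<preceq> g [^] (ceiling_exponent x + ceiling_exponent y)"
    using mult_mono[OF _ _ _ _ le_dominant_pow_ceiling le_dominant_pow_ceiling] assms
    by (simp add: int_pow_mult)
  then show ?thesis
    using le_dominant_pow_iff assms by simp
qed

lemma ceiling_exponent_mult_ge:
  assumes x: "x \<in> carrier G" and y: "y \<in> carrier G"
  shows "ceiling_exponent x + ceiling_exponent y - 1 \<le> ceiling_exponent (x \<otimes> y)"
proof (rule ccontr)
  let ?a = "g [^] (ceiling_exponent x - 1)" and ?b = "g [^] (ceiling_exponent y - 1)"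
  assume "\<not> ?thesis"
  then have "x \<otimes> y \<preceq> ?a \<otimes> ?b"
    using le_dominant_pow_iff[of "x \<otimes> y"] x y by (simp flip: int_pow_mult)
  moreover have "?a \<otimes> ?b \<preceq> x \<otimes> y" and "?a \<otimes> ?b \<noteq> x \<otimes> y"
    using dominant_pow_ceiling_pred_lt[OF x] dominant_pow_ceiling_pred_lt[OF y] x y
    by (simp_all add: mult_mono mult_neq_if_neq_left)
  ultimately show False
    using le_antisym x y by simp
qed

lemma ceiling_exponent_mult_bounds:
  assumes "x \<in> carrier G" "y \<in> carrier G"
  shows "\<bar>real_of_int (ceiling_exponent (x \<otimes> y)) - ceiling_exponent x - ceiling_exponent y\<bar> \<le> 1"
  using ceiling_exponent_mult_le[OF assms] ceiling_exponent_mult_ge[OF assms] by linarith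

lemma growth_seq_eq: "growth_seq G (\<preceq>) g h = (\<lambda>n::nat. ceiling_exponent (h [^] n) / n)"
  unfolding growth_seq_def ceiling_exponent_def ..

lemma growth_seq_convergent:
  assumes "h \<in> carrier G"
  shows "convergent (growth_seq G (\<preceq>) g h)"
  unfolding growth_seq_eq
proof (rule quasi_additive_convergent)
  show "real_of_int (ceiling_exponent (h [^] (0::nat))) = 0"
    using ceiling_exponent_dominant_pow[of 0] by simp
  show "\<bar>real_of_int (ceiling_exponent (h [^] (m + n))) - ceiling_exponent (h [^] m)
      - ceiling_exponent (h [^] n)\<bar> \<le> 1" for m n :: nat
    using ceiling_exponent_mult_bounds[of "h [^] m" "h [^] n"] assms by (simp add: nat_pow_mult)
qed

lemma ceiling_exponent_pow_mult_bounds: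
  assumes "x \<in> carrier G" "y \<in> carrier G"
  shows "\<bar>real_of_int (ceiling_exponent ((x \<otimes> y) [^] (n::nat)))
    - ceiling_exponent (x [^] n) - ceiling_exponent (y [^] n)\<bar> \<le> 1"
proof -
  have "ceiling_exponent (x [^] n \<otimes> y [^] n) \<le> ceiling_exponent ((x \<otimes> y) [^] n)
      \<and> ceiling_exponent ((x \<otimes> y) [^] n) \<le> ceiling_exponent (y [^] n \<otimes> x [^] n)
    \<or> ceiling_exponent (y [^] n \<otimes> x [^] n) \<le> ceiling_exponent ((x \<otimes> y) [^] n)
      \<and> ceiling_exponent ((x \<otimes> y) [^] n) \<le> ceiling_exponent (x [^] n \<otimes> y [^] n)"
    using pow_mult_between[OF assms, of n] assms by (auto intro: ceiling_exponent_mono)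
  then show ?thesis
    using ceiling_exponent_mult_bounds[of "x [^] n" "y [^] n"]
      ceiling_exponent_mult_bounds[of "y [^] n" "x [^] n"] assms
    by (auto simp: abs_le_iff)
qed

lemma growth_mult:
  assumes "x \<in> carrier G" "y \<in> carrier G"
  shows "growth G (\<preceq>) g (x \<otimes> y) = growth G (\<preceq>) g x + growth G (\<preceq>) g y"
proof -
  have "(\<lambda>n. ceiling_exponent ((x \<otimes> y) [^] n) / n) \<longlonglongrightarrow> growth G (\<preceq>) g x + growth G (\<preceq>) g y"
    using tendsto_ratio_of_bounded_defect[of "\<lambda>n. ceiling_exponent (x [^] n)"
        "\<lambda>n. ceiling_exponent (y [^] n)" "\<lambda>n. ceiling_exponent ((x \<otimes> y) [^] n)" 1]
      growth_seq_convergent ceiling_exponent_pow_mult_bounds assms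
    unfolding growth_def growth_seq_eq by simp
  then show ?thesis
    unfolding growth_def growth_seq_eq by (rule limI)
qed

definition floor_exponent :: "'a \<Rightarrow> int"
  where "floor_exponent a = - ceiling_exponent (inv a)"

lemma dominant_pow_le_iff_floor:
  assumes "a \<in> carrier G"
  shows "g [^] p \<preceq> a \<longleftrightarrow> p \<le> floor_exponent a"
  using inv_le_inv_iff[of a "g [^] p"] le_dominant_pow_iff[of "inv a" "- p"] assms
  unfolding floor_exponent_def by (auto simp: int_pow_neg)

lemma floor_exponent_dominant_pow [simp]: "floor_exponent (g [^] (p::int)) = p"
  unfolding floor_exponent_def by (simp flip: int_pow_neg)

lemma floor_exponent_mult_bounds:
  assumes "x \<in> carrier G" "y \<in> carrier G"
  shows "floor_exponent x + floor_exponent y \<le> floor_exponent (x \<otimes> y)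
    \<and> floor_exponent (x \<otimes> y) \<le> floor_exponent x + floor_exponent y + 1"
  using ceiling_exponent_mult_le[of "inv y" "inv x"] ceiling_exponent_mult_ge[of "inv y" "inv x"] assms
  unfolding floor_exponent_def by (simp add: inv_mult_group)

definition dominant_half_space :: "int \<Rightarrow> 'a set"
  where "dominant_half_space n = {a \<in> carrier G. g [^] n \<preceq> a}"

lemma height_dominant_half_space:
  assumes "a \<in> carrier G"
  shows "height dominant_half_space a = floor_exponent a"
proof -
  have "{n. a \<in> dominant_half_space n} = {..floor_exponent a}"
    using assms dominant_pow_le_iff_floor by (auto simp: dominant_half_space_def)
  then show ?thesis
    unfolding height_def by simp
qed

lemma half_space_filtration_dominant: "half_space_filtration (carrier G) dominant_half_space"
  unfolding half_space_filtration_def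
proof (intro conjI allI)
  fix n
  have "g [^] n \<in> dominant_half_space n - dominant_half_space (n + 1)"
    by (simp add: dominant_half_space_def dominant_pow_le_iff_floor)
  moreover have "dominant_half_space (n + 1) \<subseteq> dominant_half_space n"
    by (auto simp: dominant_half_space_def dominant_pow_le_iff_floor)
  ultimately show "dominant_half_space (n + 1) \<subset> dominant_half_space n"
    by blast
next
  have "a \<notin> dominant_half_space (floor_exponent a + 1)" for a
    by (auto simp: dominant_half_space_def dominant_pow_le_iff_floor)
  then show "(\<Inter>n. dominant_half_space n) = {}"
    by blast
  have "a \<in> dominant_half_space (floor_exponent a)" if "a \<in> carrier G" for a
    using that by (simp add: dominant_half_space_def dominant_pow_le_iff_floor)
  then show "(\<Union>n. dominant_half_space n) = carrier G"
    by (auto simp: dominant_half_space_def)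
qed

lemma half_space_order_dominant: "half_space_order (carrier G) (\<preceq>) dominant_half_space"
  unfolding half_space_order_def
proof (intro conjI half_space_filtration_dominant exI[of _ 1] ballI impI)
  show "partial_order_rel (carrier G) (\<preceq>)"
    using bi_invariant unfolding bi_invariant_order_def by simp
  fix a b
  assume a: "a \<in> carrier G" and b: "b \<in> carrier G" and "1 \<le> height2 dominant_half_space a b"
  then have "floor_exponent b < floor_exponent a"
    by (simp add: height2_def height_dominant_half_space)
  moreover have "a \<preceq> b \<Longrightarrow> floor_exponent a \<le> floor_exponent b"
    using dominant_pow_le_iff_floor[OF a, of "floor_exponent a"] dominant_pow_le_iff_floor[OF b]
      le_trans[OF _ a b, of "g [^] floor_exponent a"] by simp
  ultimately have "\<not> a \<preceq> b"
    by linarith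
  then show "b \<preceq> a"
    using le_total a b by blast
qed

lemma quasi_aut_action_left_translation:
  "quasi_aut_action G (carrier G) dominant_half_space left_translation"
  unfolding quasi_aut_action_def
proof (intro conjI left_translation_group_action exI[of _ 1] ballI)
  fix k a b assume "k \<in> carrier G" "a \<in> carrier G" "b \<in> carrier G"
  then show "\<bar>height2 dominant_half_space (left_translation k a) (left_translation k b)
      - height2 dominant_half_space a b\<bar> \<le> 1"
    using floor_exponent_mult_bounds[of k a] floor_exponent_mult_bounds[of k b]
    by (simp add: height2_def height_dominant_half_space left_translation_def abs_le_iff)
qed

lemma unbounded_action_left_translation:
  "unbounded_action G (carrier G) dominant_half_space left_translation"
proof -
  have "(\<lambda>n::int. height dominant_half_space (left_translation (g [^] n) \<one>)) = (\<lambda>n. n)"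
    by (simp add: left_translation_def height_dominant_half_space)
  then show ?thesis
    unfolding unbounded_action_def using filterlim_ident dominant_closed one_closed by metis
qed

lemma quasi_total: "quasi_total_order G (\<preceq>)"
  unfolding quasi_total_order_def
  using half_space_order_dominant quasi_aut_action_left_translation left_translation_effective
    unbounded_action_left_translation le_iff_induced_order
  by blast

end

theorem proposition1p4:
  fixes G (structure) and leq :: "'a \<Rightarrow> 'a \<Rightarrow> bool"
  assumes "group G"
    and "bi_invariant_order G leq"
    and "total_rel (carrier G) leq"
    and "admissible G leq"
  shows "quasi_total_order G leq \<and>
    (\<forall>g\<in>dominants G leq.
       (\<forall>h\<in>carrier G. convergent (growth_seq G leq g h)) \<and>
       (\<forall>x\<in>carrier G. \<forall>y\<in>carrier G.
          growth G leq g (x \<otimes> y) = growth G leq g x + growth G leq g y))"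
proof -
  have ordered: "bi_ordered_group G leq"
    using assms(1-3) by (simp add: bi_ordered_group_def bi_ordered_group_axioms_def)
  have dominant: "bi_ordered_group_with_dominant G leq g" if "g \<in> dominants G leq" for g
    using ordered that by (simp add: bi_ordered_group_with_dominant_def bi_ordered_group_with_dominant_axioms_def)
  obtain g where "g \<in> dominants G leq"
    using assms(4) unfolding admissible_def by blast
  then have "quasi_total_order G leq"
    by (rule bi_ordered_group_with_dominant.quasi_total[OF dominant])
  moreover have "convergent (growth_seq G leq g h)"
    if "g \<in> dominants G leq" "h \<in> carrier G" for g h
    using bi_ordered_group_with_dominant.growth_seq_convergent[OF dominant] that .
  moreover have "growth G leq g (x \<otimes> y) = growth G leq g x + growth G leq g y"
    if "g \<in> dominants G leq" "x \<in> carrier G" "y \<in> carrier G" for g x y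
    using bi_ordered_group_with_dominant.growth_mult[OF dominant] that .
  ultimately show ?thesis
    by blast
qed

end
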